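(* Let $\mathcal{L}_{\rm F}$ be the Fibonacci language and let ${\rm S}:\mathcal{L}_{\rm F}\to\mathbb{N}$ be a homomorphism. If ${\rm S}(0)=1$ and ${\rm S}(1)\le3$, or if ${\rm S}(0)=2$ and ${\rm S}(1)=1$, then ${\rm S}(\mathcal{L}_{\rm F})=\mathbb{N}$.
   Context: $\mathbb{N}=\{1,2,3,\dots\}$ and $[x]$ denotes the integer part (floor) of $x$. Let $\Phi=(1+\sqrt5)/2$ and $\alpha=2-\Phi$. The characteristic word $c_\alpha=(c_\alpha(n))_{n\ge0}$ is the infinite word over $\{0,1\}$ with $c_\alpha(n)=[(n+2)\alpha]-[(n+1)\alpha]$ (the infinite Fibonacci word). The Fibonacci language $\mathcal{L}_{\rm F}$ is the set of all nonempty finite words occurring as factors of $c_\alpha$. A homomorphism ${\rm S}:\mathcal{L}_{\rm F}\to\mathbb{N}$ is a map with ${\rm S}(w_1\cdots w_n)={\rm S}(w_1)+\cdots+{\rm S}(w_n)$, determined by ${\rm S}(0),{\rm S}(1)\in\mathbb{N}$. *)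

theory Defs
  imports Complex_Main
begin

definition Phi :: real where "Phi = (1 + sqrt 5) / 2"

definition alpha :: real where "alpha = 2 - Phi"

definition c_alpha :: "nat \<Rightarrow> int" where
  "c_alpha n = \<lfloor>(real n + 2) * alpha\<rfloor> - \<lfloor>(real n + 1) * alpha\<rfloor>"

definition fib_lang :: "int list set" where
  "fib_lang = {map c_alpha [i..<i + m] | i m. m \<ge> 1}"

definition hom_S :: "nat \<Rightarrow> nat \<Rightarrow> int list \<Rightarrow> nat" where
  "hom_S s0 s1 w = sum_list (map (\<lambda>x. if x = 0 then s0 else s1) w)"

end

theory Submission
  imports Defs
begin

(* Let G t be the weight of the prefix of length t of c_alpha; the weight of the factor
   c_alpha(i..j-1) is G j - G i.  Given n >= 1, choose j with G j < n <= G (j + 1).  If n is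
   not G (j + 1) itself, it falls short of it by less than one letter's weight, and since the
   word starts 0100 and contains no factor 11, a few letters after position j reach
   G i + n for one of the short prefix weights G i in {s0, s0 + s1, 3 s0 + s1}. *)

lemma alpha_bounds: "1/3 < alpha" "alpha < 2/5"
proof -
  have "sqrt 5 < 9/4"
    by (rule real_less_lsqrt) (auto simp: power2_eq_square)
  moreover have "11/5 < sqrt 5"
    by (rule real_less_rsqrt) (simp add: power2_eq_square)
  ultimately show "1/3 < alpha" "alpha < 2/5"
    unfolding alpha_def Phi_def by auto
qed

lemma floor_add_less_one:
  fixes x d :: real
  assumes "0 \<le> d" "d < 1"
  shows "\<lfloor>x + d\<rfloor> = \<lfloor>x\<rfloor> \<or> \<lfloor>x + d\<rfloor> = \<lfloor>x\<rfloor> + 1"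
proof -
  have "\<lfloor>x\<rfloor> \<le> \<lfloor>x + d\<rfloor>" using assms by (intro floor_mono) auto
  moreover have "\<lfloor>x + d\<rfloor> \<le> \<lfloor>x\<rfloor> + 1"
    using assms floor_correct[of x] by (simp add: floor_le_iff) linarith
  ultimately show ?thesis by linarith
qed

lemma c_alpha_letter: "c_alpha n = 0 \<or> c_alpha n = 1"
proof -
  have "(real n + 2) * alpha = (real n + 1) * alpha + alpha"
    by (simp add: algebra_simps)
  then show ?thesis
    unfolding c_alpha_def using floor_add_less_one[of alpha "(real n + 1) * alpha"] alpha_bounds
    by auto
qed

(* Two consecutive letters sum to a floor difference over a step 2 alpha < 1. *)
lemma c_alpha_no_11:
  assumes "c_alpha n = 1"
  shows "c_alpha (Suc n) = 0"
proof -
  have shift: "(real (Suc n) + 2) * alpha = (real n + 1) * alpha + 2 * alpha"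
    "real (Suc n) + 1 = real n + 2" by (simp_all add: algebra_simps)
  have "\<lfloor>(real n + 1) * alpha + 2 * alpha\<rfloor> \<le> \<lfloor>(real n + 1) * alpha\<rfloor> + 1"
    using floor_add_less_one[of "2 * alpha" "(real n + 1) * alpha"] alpha_bounds by auto
  then show ?thesis
    using assms c_alpha_letter[of "Suc n"] unfolding c_alpha_def shift by auto
qed

lemma c_alpha_initial: "c_alpha 0 = 0" "c_alpha 1 = 1" "c_alpha 2 = 0" "c_alpha 3 = 0"
proof -
  have "\<lfloor>alpha\<rfloor> = 0" "\<lfloor>2 * alpha\<rfloor> = 0" "\<lfloor>3 * alpha\<rfloor> = 1"
    "\<lfloor>4 * alpha\<rfloor> = 1" "\<lfloor>5 * alpha\<rfloor> = 1"
    using alpha_bounds by (simp_all add: floor_eq_iff)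
  then show "c_alpha 0 = 0" "c_alpha 1 = 1" "c_alpha 2 = 0" "c_alpha 3 = 0"
    unfolding c_alpha_def by (simp_all add: numeral_eq_Suc)
qed

definition prefix_weight :: "nat \<Rightarrow> nat \<Rightarrow> nat \<Rightarrow> nat" where
  "prefix_weight s0 s1 t = hom_S s0 s1 (map c_alpha [0..<t])"

lemma prefix_weight_0 [simp]: "prefix_weight s0 s1 0 = 0"
  by (simp add: prefix_weight_def hom_S_def)

lemma prefix_weight_Suc [simp]:
  "prefix_weight s0 s1 (Suc t) = prefix_weight s0 s1 t + (if c_alpha t = 0 then s0 else s1)"
  by (simp add: prefix_weight_def hom_S_def)

lemma prefix_weight_initial:
  "prefix_weight s0 s1 1 = s0" "prefix_weight s0 s1 2 = s0 + s1"
  "prefix_weight s0 s1 4 = 3 * s0 + s1"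
  using c_alpha_initial by (simp_all add: numeral_eq_Suc)

lemma prefix_weight_ge: "s0 \<ge> 1 \<Longrightarrow> s1 \<ge> 1 \<Longrightarrow> t \<le> prefix_weight s0 s1 t"
  by (induction t) auto

lemma hom_S_factor:
  assumes "i \<le> j"
  shows "hom_S s0 s1 (map c_alpha [i..<j]) = prefix_weight s0 s1 j - prefix_weight s0 s1 i"
proof -
  have "[0..<j] = [0..<i] @ [i..<j]"
    using assms upt_add_eq_append[of 0 i "j - i"] by simp
  then show ?thesis by (simp add: prefix_weight_def hom_S_def)
qed

lemma prefix_weight_diff_in_image:
  assumes "i < j" "prefix_weight s0 s1 j = prefix_weight s0 s1 i + n"
  shows "n \<in> hom_S s0 s1 ` fib_lang"
proof -
  have "map c_alpha [i..<j] \<in> fib_lang"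
    unfolding fib_lang_def using assms(1) by (intro CollectI exI[of _ i] exI[of _ "j - i"]) auto
  moreover have "hom_S s0 s1 (map c_alpha [i..<j]) = n"
    using hom_S_factor[of i j] assms by simp
  ultimately show ?thesis by force
qed

lemma hom_S_pos: "s0 \<ge> 1 \<Longrightarrow> s1 \<ge> 1 \<Longrightarrow> w \<noteq> [] \<Longrightarrow> 1 \<le> hom_S s0 s1 w"
  by (cases w) (auto simp: hom_S_def)

lemma prefix_weight_bracket:
  assumes "s0 \<ge> 1" "s1 \<ge> 1" "n \<ge> 1"
  obtains j where "prefix_weight s0 s1 j < n" "n \<le> prefix_weight s0 s1 (Suc j)"
proof -
  let ?P = "\<lambda>t. n \<le> prefix_weight s0 s1 t"
  have "?P n" using prefix_weight_ge[OF assms(1,2)] .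
  then have reached: "?P (LEAST t. ?P t)" by (rule LeastI)
  with assms(3) obtain j where j: "(LEAST t. ?P t) = Suc j"
    by (cases "LEAST t. ?P t") auto
  have "\<not> ?P j" using not_less_Least[of j ?P] j by simp
  with reached j show ?thesis by (intro that) (simp_all del: prefix_weight_Suc)
qed

lemma gap_in_image_1_2:
  assumes "prefix_weight 1 2 j < n" "n < prefix_weight 1 2 (Suc j)"
  shows "n \<in> hom_S 1 2 ` fib_lang"
proof -
  have "c_alpha j = 1" using assms c_alpha_letter[of j] by (auto split: if_splits)
  then have "j \<noteq> 0" using c_alpha_initial by (cases j) auto
  moreover have "prefix_weight 1 2 (Suc j) = prefix_weight 1 2 1 + n"
    using assms prefix_weight_initial by (auto split: if_splits)
  ultimately show ?thesis by (intro prefix_weight_diff_in_image[of 1 "Suc j"]) auto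
qed

lemma gap_in_image_1_3:
  assumes "prefix_weight 1 3 j < n" "n < prefix_weight 1 3 (Suc j)"
  shows "n \<in> hom_S 1 3 ` fib_lang"
proof -
  let ?G = "prefix_weight 1 3"
  have cj: "c_alpha j = 1" using assms c_alpha_letter[of j] by (auto split: if_splits)
  then have "j \<noteq> 0" using c_alpha_initial by (cases j) auto
  have step: "?G (Suc j) = ?G j + 3" using cj by simp
  consider "n = ?G j + 2" | "n = ?G j + 1" using assms step by linarith
  then show ?thesis
  proof cases
    case 1
    then have "?G (Suc j) = ?G 1 + n" using step prefix_weight_initial by simp
    with \<open>j \<noteq> 0\<close> show ?thesis by (intro prefix_weight_diff_in_image[of 1 "Suc j"]) auto
  next
    case 2
    have after: "?G (Suc (Suc j)) = n + 3" using c_alpha_no_11[OF cj] step 2 by simp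
    consider "c_alpha (Suc (Suc j)) = 0" | "c_alpha (Suc (Suc j)) = 1"
      using c_alpha_letter by blast
    then show ?thesis
    proof cases
      case 1
      then have "?G (Suc (Suc (Suc j))) = ?G 2 + n" using after prefix_weight_initial by simp
      then show ?thesis by (intro prefix_weight_diff_in_image[of 2 "Suc (Suc (Suc j))"]) auto
    next
      case 2
      then have "j \<noteq> 1" using c_alpha_initial by (auto simp: numeral_eq_Suc)
      moreover have "?G (Suc (Suc (Suc j))) = ?G 4 + n"
        using 2 after prefix_weight_initial by simp
      ultimately show ?thesis using \<open>j \<noteq> 0\<close>
        by (intro prefix_weight_diff_in_image[of 4 "Suc (Suc (Suc j))"]) auto
    qed
  qed
qed

lemma gap_in_image_2_1:
  assumes "prefix_weight 2 1 j < n" "n < prefix_weight 2 1 (Suc j)"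
  shows "n \<in> hom_S 2 1 ` fib_lang"
proof -
  let ?G = "prefix_weight 2 1"
  have "c_alpha j = 0" using assms c_alpha_letter[of j] by (auto split: if_splits)
  then have step: "?G (Suc j) = n + 1" using assms by simp
  consider "c_alpha (Suc j) = 0" | "c_alpha (Suc j) = 1" using c_alpha_letter by blast
  then show ?thesis
  proof cases
    case 1
    then have "j \<noteq> 0" using c_alpha_initial by (cases j) auto
    moreover have "?G (Suc (Suc j)) = ?G 2 + n" using 1 step prefix_weight_initial by simp
    ultimately show ?thesis by (intro prefix_weight_diff_in_image[of 2 "Suc (Suc j)"]) auto
  next
    case 2
    then have "?G (Suc (Suc j)) = ?G 1 + n" using step prefix_weight_initial by simp
    then show ?thesis by (intro prefix_weight_diff_in_image[of 1 "Suc (Suc j)"]) auto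
  qed
qed

theorem lemma5:
  fixes s0 s1 :: nat
  assumes "s0 \<ge> 1" and "s1 \<ge> 1"
    and "(s0 = 1 \<and> s1 \<le> 3) \<or> (s0 = 2 \<and> s1 = 1)"
  shows "hom_S s0 s1 ` fib_lang = {n. n \<ge> 1}"
proof
  show "hom_S s0 s1 ` fib_lang \<subseteq> {n. n \<ge> 1}"
    unfolding fib_lang_def using hom_S_pos[OF assms(1,2)] by auto
next
  show "{n. n \<ge> 1} \<subseteq> hom_S s0 s1 ` fib_lang"
  proof
    fix n :: nat
    assume "n \<in> {n. n \<ge> 1}"
    then obtain j where below: "prefix_weight s0 s1 j < n"
      and above: "n \<le> prefix_weight s0 s1 (Suc j)"
      using prefix_weight_bracket[OF assms(1,2)] by auto
    show "n \<in> hom_S s0 s1 ` fib_lang"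
    proof (cases "n = prefix_weight s0 s1 (Suc j)")
      case True
      then show ?thesis by (intro prefix_weight_diff_in_image[of 0 "Suc j"]) auto
    next
      case False
      with above have gap: "n < prefix_weight s0 s1 (Suc j)" by simp
      consider "s0 = 1" "s1 = 1" | "s0 = 1" "s1 = 2" | "s0 = 1" "s1 = 3" | "s0 = 2" "s1 = 1"
        using assms by linarith
      then show ?thesis
        using below gap gap_in_image_1_2 gap_in_image_1_3 gap_in_image_2_1
        by cases (auto split: if_splits)
    qed
  qed
qed

end
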